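(* Let $\varphi$ be a quantifier-free formula in the SMT theory of floating-point numbers and $\mathit{cost}$ a floating-point variable occurring in $\varphi$, of sort with $e$ exponent bits and $s$ significand bits (including the hidden bit), so that $\mathit{cost}$ is a vector of $n=e+s$ bits. Let $\varphi_{\mathrm{noNaN}}:=\varphi\wedge\neg\mathrm{isNaN}(\mathit{cost})$ be satisfiable, and consider the minimization (resp. maximization) of $\mathit{cost}$ subject to $\varphi_{\mathrm{noNaN}}$. Let $k\in[0..n-1]$, let $\tau_k$ be an assignment to $\mathit{cost}[0],\dots,\mathit{cost}[k-1]$, and let $d$ be the dynamic attractor for $\mathit{cost}$ with respect to $\tau_k$. Let $\tau_{k+1}:=\tau_k\cup\{\mathit{cost}[k]:=d[k]\}$ and $\tau'_{k+1}:=\tau_k\cup\{\mathit{cost}[k]:=\overline{d[k]}\}$, and let $\mathcal{M},\mathcal{M}'$ be models of $\varphi_{\mathrm{noNaN}}$ extending $\tau_{k+1}$ and $\tau'_{k+1}$ respectively. Then $\mathcal{M}(\mathit{cost})\le\mathcal{M}'(\mathit{cost})$ (resp. $\mathcal{M}(\mathit{cost})\ge\mathcal{M}'(\mathit{cost})$).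
   Context: Bits are indexed from the most significant bit $\mathit{cost}[0]$ to the least significant $\mathit{cost}[n-1]$; $\mathit{cost}[0]$ is the sign bit $\sigma$, $\mathit{cost}[1..e]$ is the exponent $E$ (read as an unsigned integer) and $\mathit{cost}[e+1..n-1]$ is the stored significand $m$ of $s-1$ bits. With bias $b=2^{e-1}-1$, IEEE 754-2008 semantics: if $E$ is all ones and $m=0$ the value is $+\infty$ or $-\infty$ according to $\sigma$; if $E$ is all ones and $m\ne0$ the value is NaN; if $E=0$ the value is the subnormal $(-1)^\sigma 2^{1-b}(0.m)_2$; otherwise it is the normal $(-1)^\sigma 2^{E-b}(1.m)_2$. The order $\le$ is the usual total order on non-NaN floating-point values (real order extended by $\pm\infty$, with $+0$ and $-0$ equal). The dynamic attractor for $\mathit{cost}$ with respect to an assignment $\tau_k$ to its $k$ most significant bits is the smallest (resp., when maximizing, largest) floating-point value different from NaN whose $k$ most significant bits coincide with those assigned by $\tau_k$; $d[k]$ denotes its $k$-th bit and $\overline{d[k]}$ the complement bit. *)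

theory Defs
  imports Complex_Main "HOL-Library.Extended_Real"
begin

text \<open>IEEE 754-2008 binary floating-point numbers with e exponent bits and
 s significand bits (including the hidden bit), represented as bit lists of
 length n = e + s, most significant bit first (bit 0 = sign bit).\<close>

definition bits_to_nat :: "bool list \<Rightarrow> nat" where
  "bits_to_nat xs = foldl (\<lambda>a b. 2 * a + (if b then 1 else 0)) 0 xs"

definition fp_sign :: "bool list \<Rightarrow> bool" where
  "fp_sign x = x ! 0"

definition fp_exp :: "nat \<Rightarrow> bool list \<Rightarrow> nat" where
  "fp_exp e x = bits_to_nat (take e (drop 1 x))"

definition fp_sig :: "nat \<Rightarrow> bool list \<Rightarrow> nat" where
  "fp_sig e x = bits_to_nat (drop (e + 1) x)"

definition fp_bias :: "nat \<Rightarrow> int" where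
  "fp_bias e = 2 ^ (e - 1) - 1"

definition fp_is_nan :: "nat \<Rightarrow> bool list \<Rightarrow> bool" where
  "fp_is_nan e x \<longleftrightarrow> fp_exp e x = 2 ^ e - 1 \<and> fp_sig e x \<noteq> 0"

text \<open>Value of a non-NaN float (for NaN the result is irrelevant).\<close>
definition fp_val :: "nat \<Rightarrow> nat \<Rightarrow> bool list \<Rightarrow> ereal" where
  "fp_val e s x =
     (let \<sigma> = fp_sign x; E = fp_exp e x; m = fp_sig e x;
          sg = (if \<sigma> then -1 else 1 :: real);
          frac = real m / 2 ^ (s - 1) in
      if E = 2 ^ e - 1 then (if \<sigma> then -\<infinity> else \<infinity>)
      else if E = 0 then ereal (sg * 2 powr real_of_int (1 - fp_bias e) * frac)
      else ereal (sg * 2 powr real_of_int (int E - fp_bias e) * (1 + frac)))"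

definition fp_attractor :: "nat \<Rightarrow> nat \<Rightarrow> bool \<Rightarrow> bool list \<Rightarrow> bool list \<Rightarrow> bool" where
  "fp_attractor e s maxi tau d \<longleftrightarrow>
     length d = e + s \<and> \<not> fp_is_nan e d \<and> take (length tau) d = tau \<and>
     (\<forall>x. length x = e + s \<and> \<not> fp_is_nan e x \<and> take (length tau) x = tau \<longrightarrow>
        (if maxi then fp_val e s x \<le> fp_val e s d else fp_val e s d \<le> fp_val e s x))"

end

theory Submission
  imports Defs
begin

text \<open>Away from the sign bit, the IEEE encoding is monotone: for two non-NaN floats of the
  same sign, the unsigned integer formed by exponent and stored significand orders their
  magnitudes. Hence two non-NaN floats whose encodings first differ at a position k \<ge> 1
  compare according to the sign and to the bit at k alone. The model \<M> agrees with the
  attractor d on bits 0..k, the model \<M>' disagrees with it at bit k, and d is at least as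
  good as \<M>'; so \<M> and \<M>' compare exactly as d and \<M>' do. For k = 0 the attractor is
  -\<infinity> (resp. +\<infinity>), whose sign bit then separates non-positive from non-negative values.\<close>

lemma bits_to_nat_Nil [simp]: "bits_to_nat [] = 0"
  by (simp add: bits_to_nat_def)

lemma bits_to_nat_snoc: "bits_to_nat (xs @ [b]) = 2 * bits_to_nat xs + (if b then 1 else 0)"
  by (simp add: bits_to_nat_def)

lemma bits_to_nat_append:
  "bits_to_nat (xs @ ys) = bits_to_nat xs * 2 ^ length ys + bits_to_nat ys"
proof (induction ys rule: rev_induct)
  case (snoc y ys)
  then show ?case
    using bits_to_nat_snoc[of "xs @ ys" y] bits_to_nat_snoc[of ys y] by simp
qed simp

lemma bits_to_nat_Cons: "bits_to_nat (b # xs) = (if b then 2 ^ length xs else 0) + bits_to_nat xs"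
  using bits_to_nat_append[of "[b]" xs] bits_to_nat_snoc[of "[]" b] by simp

lemma bits_to_nat_less: "bits_to_nat xs < 2 ^ length xs"
  by (induction xs) (auto simp: bits_to_nat_Cons)

lemma bits_to_nat_replicate_True: "bits_to_nat (replicate n True) = 2 ^ n - 1"
proof (induction n)
  case (Suc n)
  have "(1::nat) \<le> 2 ^ n" by simp
  with Suc show ?case by (simp add: bits_to_nat_Cons)
qed simp

lemma bits_to_nat_replicate_False: "bits_to_nat (replicate n False) = 0"
  by (induction n) (simp_all add: bits_to_nat_Cons)

lemma bits_to_nat_less_at_first_difference:
  assumes "length x = length y" "k < length x" "take k x = take k y" "\<not> x ! k" "y ! k"
  shows "bits_to_nat x < bits_to_nat y"
proof -
  define L where "L = length x - Suc k"
  have x: "x = take k x @ False # drop (Suc k) x" and y: "y = take k x @ True # drop (Suc k) y"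
    using assms id_take_nth_drop by metis+
  have "bits_to_nat x = bits_to_nat (take k x) * 2 ^ Suc L + bits_to_nat (drop (Suc k) x)"
    using bits_to_nat_append[of "take k x" "False # drop (Suc k) x"] assms
    by (subst x) (simp add: bits_to_nat_Cons L_def)
  moreover have "bits_to_nat y = bits_to_nat (take k x) * 2 ^ Suc L + 2 ^ L + bits_to_nat (drop (Suc k) y)"
    using bits_to_nat_append[of "take k x" "True # drop (Suc k) y"] assms
    by (subst y) (simp add: bits_to_nat_Cons L_def)
  moreover have "bits_to_nat (drop (Suc k) x) < 2 ^ L"
    using bits_to_nat_less[of "drop (Suc k) x"] by (simp add: L_def)
  ultimately show ?thesis by linarith
qed

lemma mixed_radix_less_imp_lex:
  fixes p :: nat
  assumes "m1 < p" "m2 < p" "E1 * p + m1 < E2 * p + m2"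
  shows "E1 < E2 \<or> (E1 = E2 \<and> m1 < m2)"
proof (rule ccontr)
  assume "\<not> ?thesis"
  then consider "E2 < E1" | "E1 = E2" "m2 \<le> m1" by linarith
  then show False
  proof cases
    case 1
    have "E2 * p + m2 < (E2 + 1) * p" using assms(2) by simp
    also have "\<dots> \<le> E1 * p" using 1 by (intro mult_le_mono1) simp
    finally show False using assms(3) by linarith
  qed (use assms(3) in simp)
qed

lemma fp_exp_less: "fp_exp e x < 2 ^ e"
proof -
  have "fp_exp e x < 2 ^ length (take e (drop 1 x))"
    unfolding fp_exp_def by (rule bits_to_nat_less)
  also have "\<dots> \<le> 2 ^ e" by (rule power_increasing) simp_all
  finally show ?thesis .
qed

lemma fp_sig_less: "length x = e + s \<Longrightarrow> fp_sig e x < 2 ^ (s - 1)"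
  unfolding fp_sig_def using bits_to_nat_less[of "drop (e + 1) x"] by simp

lemma bits_to_nat_drop_sign:
  assumes "length x = e + s" "s \<ge> 1"
  shows "bits_to_nat (drop 1 x) = fp_exp e x * 2 ^ (s - 1) + fp_sig e x"
proof -
  have "drop 1 x = take e (drop 1 x) @ drop (e + 1) x"
    by (metis append_take_drop_id drop_drop add.commute)
  then show ?thesis
    unfolding fp_exp_def fp_sig_def
    using bits_to_nat_append[of "take e (drop 1 x)" "drop (e + 1) x"] assms by simp
qed

text \<open>The magnitude in units of 2 powr (- bias) / 2 ^ (s - 1), half the least positive subnormal.\<close>
definition fp_mag_units :: "nat \<Rightarrow> nat \<Rightarrow> nat \<Rightarrow> nat" where
  "fp_mag_units s E m = (if E = 0 then 2 * m else 2 ^ E * (2 ^ (s - 1) + m))"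

definition fp_magnitude :: "nat \<Rightarrow> nat \<Rightarrow> bool list \<Rightarrow> ereal" where
  "fp_magnitude e s x =
     (if fp_exp e x = 2 ^ e - 1 then \<infinity>
      else ereal (2 powr (- real_of_int (fp_bias e)) / 2 ^ (s - 1)
                  * real (fp_mag_units s (fp_exp e x) (fp_sig e x))))"

lemma fp_magnitude_nonneg: "0 \<le> fp_magnitude e s x"
  by (simp add: fp_magnitude_def)

lemma fp_val_eq_signed_magnitude:
  "fp_val e s x = (if fp_sign x then - fp_magnitude e s x else fp_magnitude e s x)"
proof -
  let ?b = "real_of_int (fp_bias e)" and ?p = "(2::real) ^ (s - 1)"
  have subnormal: "2 powr real_of_int (1 - fp_bias e) * (real m / ?p)
      = 2 powr (- ?b) / ?p * real (fp_mag_units s 0 m)" for m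
    using powr_add[of 2 1 "- ?b"] by (simp add: fp_mag_units_def)
  have normal: "2 powr real_of_int (int E - fp_bias e) * (1 + real m / ?p)
      = 2 powr (- ?b) / ?p * real (fp_mag_units s E m)" if "E \<noteq> 0" for E m
  proof -
    have "2 powr real_of_int (int E - fp_bias e) = 2 ^ E * 2 powr (- ?b)"
      by (simp add: powr_add[symmetric] powr_realpow[symmetric])
    with that show ?thesis by (simp add: fp_mag_units_def field_simps)
  qed
  show ?thesis
    unfolding fp_val_def Let_def fp_magnitude_def
    using subnormal normal by (auto simp: algebra_simps)
qed

lemma fp_mag_units_strict_mono:
  assumes "m1 < 2 ^ (s - 1)" "m2 < 2 ^ (s - 1)" "E1 < E2 \<or> (E1 = E2 \<and> m1 < m2)"
  shows "fp_mag_units s E1 m1 < fp_mag_units s E2 m2"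
proof (cases "E1 = E2")
  case False
  let ?p = "2 ^ (s - 1) :: nat"
  have "E1 < E2" using assms(3) False by simp
  have "fp_mag_units s E1 m1 < 2 ^ (E1 + 1) * ?p"
    using assms(1) by (auto simp: fp_mag_units_def)
  also have "\<dots> \<le> 2 ^ E2 * ?p"
    using \<open>E1 < E2\<close> by (intro mult_le_mono1 power_increasing) simp_all
  also have "\<dots> \<le> fp_mag_units s E2 m2"
    using \<open>E1 < E2\<close> by (simp add: fp_mag_units_def)
  finally show ?thesis .
qed (use assms in \<open>auto simp: fp_mag_units_def\<close>)

lemma fp_magnitude_strict_mono:
  assumes "length x = e + s" "length y = e + s" "s \<ge> 1" "\<not> fp_is_nan e y"
    and "bits_to_nat (drop 1 x) < bits_to_nat (drop 1 y)"
  shows "fp_magnitude e s x < fp_magnitude e s y"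
proof -
  have lex: "fp_exp e x < fp_exp e y \<or> (fp_exp e x = fp_exp e y \<and> fp_sig e x < fp_sig e y)"
    using mixed_radix_less_imp_lex[OF fp_sig_less fp_sig_less] assms
    by (metis bits_to_nat_drop_sign)
  have "fp_exp e x \<noteq> 2 ^ e - 1"
    using lex assms(4) fp_exp_less[of e y] by (auto simp: fp_is_nan_def)
  moreover have "fp_mag_units s (fp_exp e x) (fp_sig e x) < fp_mag_units s (fp_exp e y) (fp_sig e y)"
    using fp_mag_units_strict_mono[OF fp_sig_less fp_sig_less lex] assms(1,2) .
  ultimately show ?thesis
    by (auto simp: fp_magnitude_def intro!: divide_strict_right_mono mult_strict_left_mono)
qed

lemma fp_sign_eq_if_take_eq:
  assumes "take k x = take k y" "1 \<le> k"
  shows "fp_sign x = fp_sign y"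
  using assms unfolding fp_sign_def by (metis One_nat_def Suc_le_eq nth_take)

lemma fp_magnitude_less_at_first_difference:
  assumes "length x = e + s" "length y = e + s" "s \<ge> 1" "\<not> fp_is_nan e y"
    and "take k x = take k y" "1 \<le> k" "k < e + s" "\<not> x ! k" "y ! k"
  shows "fp_magnitude e s x < fp_magnitude e s y"
proof (rule fp_magnitude_strict_mono[OF assms(1-4)])
  obtain j where k: "k = Suc j" using assms(6) by (cases k) auto
  have "take j (drop 1 x) = take j (drop 1 y)"
    using assms(5) by (simp add: k take_drop)
  then show "bits_to_nat (drop 1 x) < bits_to_nat (drop 1 y)"
    using assms(1,2,7,8,9) by (intro bits_to_nat_less_at_first_difference) (simp_all add: k)
qed

lemma fp_val_less_iff_first_difference:
  assumes "length x = e + s" "length y = e + s" "s \<ge> 1"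
    and "\<not> fp_is_nan e x" "\<not> fp_is_nan e y"
    and "take k x = take k y" "1 \<le> k" "k < e + s" "x ! k \<noteq> y ! k"
  shows "fp_val e s x < fp_val e s y \<longleftrightarrow> y ! k \<noteq> fp_sign x"
proof -
  have sign: "fp_sign y = fp_sign x"
    using fp_sign_eq_if_take_eq[OF assms(6,7)] by simp
  show ?thesis
  proof (cases "y ! k")
    case True
    then have "fp_magnitude e s x < fp_magnitude e s y"
      using assms by (intro fp_magnitude_less_at_first_difference) auto
    with sign True show ?thesis by (cases "fp_sign x") (auto simp: fp_val_eq_signed_magnitude)
  next
    case False
    then have "fp_magnitude e s y < fp_magnitude e s x"
      using assms by (intro fp_magnitude_less_at_first_difference[of y e s x k]) auto
    with sign False show ?thesis by (cases "fp_sign x") (auto simp: fp_val_eq_signed_magnitude)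
  qed
qed

lemma fp_val_neq_at_first_difference:
  assumes "length x = e + s" "length y = e + s" "s \<ge> 1"
    and "\<not> fp_is_nan e x" "\<not> fp_is_nan e y"
    and "take k x = take k y" "1 \<le> k" "k < e + s" "x ! k \<noteq> y ! k"
  shows "fp_val e s x \<noteq> fp_val e s y"
proof -
  have "fp_sign y = fp_sign x"
    using fp_sign_eq_if_take_eq[OF assms(6,7)] by simp
  then show ?thesis
    using fp_val_less_iff_first_difference[OF assms]
      fp_val_less_iff_first_difference[OF assms(2,1,3,5,4) assms(6)[symmetric] assms(7,8)] assms(9)
    by auto
qed

lemma fp_val_sign: "if fp_sign x then fp_val e s x \<le> 0 else 0 \<le> fp_val e s x"
  using fp_magnitude_nonneg[of e s x] by (simp add: fp_val_eq_signed_magnitude)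

definition fp_inf_bits :: "nat \<Rightarrow> nat \<Rightarrow> bool \<Rightarrow> bool list" where
  "fp_inf_bits e s neg = neg # replicate e True @ replicate (s - 1) False"

lemma length_fp_inf_bits: "s \<ge> 1 \<Longrightarrow> length (fp_inf_bits e s neg) = e + s"
  by (simp add: fp_inf_bits_def)

lemma fp_inf_bits_fields:
  "fp_sign (fp_inf_bits e s neg) = neg" "fp_exp e (fp_inf_bits e s neg) = 2 ^ e - 1"
  "fp_sig e (fp_inf_bits e s neg) = 0"
  by (simp_all add: fp_inf_bits_def fp_sign_def fp_exp_def fp_sig_def
      bits_to_nat_replicate_True bits_to_nat_replicate_False)

lemma fp_inf_bits_not_nan: "\<not> fp_is_nan e (fp_inf_bits e s neg)"
  by (simp add: fp_is_nan_def fp_inf_bits_fields)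

lemma fp_val_fp_inf_bits: "fp_val e s (fp_inf_bits e s neg) = (if neg then -\<infinity> else \<infinity>)"
  by (simp add: fp_val_eq_signed_magnitude fp_magnitude_def fp_inf_bits_fields)

lemma fp_attractor_Nil_sign:
  assumes "s \<ge> 1" "fp_attractor e s maxi [] d"
  shows "fp_sign d \<longleftrightarrow> \<not> maxi"
proof -
  let ?w = "fp_inf_bits e s (\<not> maxi)"
  have "if maxi then fp_val e s ?w \<le> fp_val e s d else fp_val e s d \<le> fp_val e s ?w"
    using assms length_fp_inf_bits fp_inf_bits_not_nan
    unfolding fp_attractor_def by simp
  then have "fp_val e s d = (if maxi then \<infinity> else -\<infinity>)"
    by (auto simp: fp_val_fp_inf_bits split: if_splits)
  then show ?thesis
    using fp_val_sign[of d e s] by (auto split: if_splits)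
qed

lemma fp_attractor_sign_choice:
  assumes "s \<ge> 1" "fp_attractor e s maxi [] d" "x ! 0 = d ! 0" "y ! 0 \<noteq> d ! 0"
  shows "if maxi then fp_val e s y \<le> fp_val e s x else fp_val e s x \<le> fp_val e s y"
proof -
  have "fp_sign x \<longleftrightarrow> \<not> maxi" "fp_sign y \<longleftrightarrow> maxi"
    using fp_attractor_Nil_sign[OF assms(1,2)] assms(3,4) by (auto simp: fp_sign_def)
  then show ?thesis
    using fp_val_sign[of x e s] fp_val_sign[of y e s] by (auto split: if_splits)
qed

lemma fp_attractor_bit_choice:
  assumes "s \<ge> 1" "fp_attractor e s maxi tau d" "length tau = k" "1 \<le> k" "k < e + s"
    and "length x = e + s" "\<not> fp_is_nan e x" "take k x = tau" "x ! k = d ! k"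
    and "length y = e + s" "\<not> fp_is_nan e y" "take k y = tau" "y ! k \<noteq> d ! k"
  shows "if maxi then fp_val e s y \<le> fp_val e s x else fp_val e s x \<le> fp_val e s y"
proof -
  let ?v = "fp_val e s"
  have d: "length d = e + s" "\<not> fp_is_nan e d" "take k d = tau"
    and d_opt: "if maxi then ?v y \<le> ?v d else ?v d \<le> ?v y"
    using assms(2,3,10-12) unfolding fp_attractor_def by auto
  have "fp_sign x = fp_sign d"
    using fp_sign_eq_if_take_eq[of k x d] d(3) assms(4,8) by simp
  moreover have "?v x < ?v y \<longleftrightarrow> y ! k \<noteq> fp_sign x"
    using assms by (intro fp_val_less_iff_first_difference) simp_all
  moreover have "?v d < ?v y \<longleftrightarrow> y ! k \<noteq> fp_sign d"
    using assms d by (intro fp_val_less_iff_first_difference) auto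
  ultimately have same_side: "?v x < ?v y \<longleftrightarrow> ?v d < ?v y"
    by simp
  have "?v d \<noteq> ?v y"
    using assms d by (intro fp_val_neq_at_first_difference) auto
  then show ?thesis
    using same_side d_opt by (auto split: if_splits)
qed

lemma take_Suc_eq_snocD:
  assumes "take (Suc k) xs = ys @ [b]" "length ys = k"
  shows "take k xs = ys" "xs ! k = b"
proof -
  have "k < length xs"
    using arg_cong[OF assms(1), of length] assms(2) by simp
  then have "take (Suc k) xs = take k xs @ [xs ! k]" by (simp add: take_Suc_conv_app_nth)
  then show "take k xs = ys" "xs ! k = b" using assms by (simp_all add: append_eq_append_conv)
qed

theorem lemma1:
  fixes e s k :: nat and maxi :: bool
    and phi :: "'m \<Rightarrow> bool"
    and cost :: "'m \<Rightarrow> bool list"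
    and tau d :: "bool list" and M M' :: 'm
  assumes "e > 1" and "s > 1"
    and sorted: "\<And>N. length (cost N) = e + s"
    and sat: "\<exists>N. phi N \<and> \<not> fp_is_nan e (cost N)"
    and "k < e + s" and "length tau = k"
    and attr: "fp_attractor e s maxi tau d"
    and M: "phi M \<and> \<not> fp_is_nan e (cost M)" "take (k + 1) (cost M) = tau @ [d ! k]"
    and M': "phi M' \<and> \<not> fp_is_nan e (cost M')" "take (k + 1) (cost M') = tau @ [\<not> d ! k]"
  shows "if maxi then fp_val e s (cost M') \<le> fp_val e s (cost M)
         else fp_val e s (cost M) \<le> fp_val e s (cost M')"
proof -
  have s: "s \<ge> 1" using \<open>s > 1\<close> by simp
  note x = take_Suc_eq_snocD[OF M(2)[unfolded Suc_eq_plus1[symmetric]] \<open>length tau = k\<close>]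
  note y = take_Suc_eq_snocD[OF M'(2)[unfolded Suc_eq_plus1[symmetric]] \<open>length tau = k\<close>]
  show ?thesis
  proof (cases "k = 0")
    case True
    then show ?thesis
      using fp_attractor_sign_choice[OF s] attr x(2) y(2) \<open>length tau = k\<close> by simp
  next
    case False
    then show ?thesis
      using fp_attractor_bit_choice[OF s attr \<open>length tau = k\<close> _ \<open>k < e + s\<close>] x y M(1) M'(1) sorted
      by simp
  qed
qed

end
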